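(* Let $0<\mu<1/2$ and $\Psi(\xi,\eta)=-\frac34\eta(\eta-2\xi)^2$. For every $M\ge1$, $$\sup_{\xi,\alpha\in\mathbb R}\int_{\mathbb R}\max(|\xi|,|\eta|)\frac{\langle\xi\rangle^\mu}{|\eta|^{1/2}\langle\xi-\eta\rangle^\mu}\mathbb 1_{|\Psi(\xi,\eta)-\alpha|<M}\,d\eta\lesssim\sqrt M.$$
   Context: $\langle\xi\rangle=(1+\xi^2)^{1/2}$. Implicit constants depend only on $\mu$. *)

theory Defs
  imports "HOL-Analysis.Analysis"
begin

definition japbr :: "real \<Rightarrow> real" where
  "japbr x = sqrt (1 + x\<^sup>2)"

definition Psi :: "real \<Rightarrow> real \<Rightarrow> real" where
  "Psi \<xi> \<eta> = - (3/4) * \<eta> * (\<eta> - 2 * \<xi>)\<^sup>2"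

end

theory Submission
  imports Defs
begin

(*
  For \<xi> \<ge> 0 (the case \<xi> < 0 follows by the reflection \<eta> \<mapsto> -\<eta>) the set
  {\<eta>. |\<Psi>(\<xi>,\<eta>) - \<alpha>| < M} is bounded, and we cut it at \<xi>/3, 2\<xi>/3, 5\<xi>/6, 7\<xi>/6 and 2\<xi>.
  On each piece there is an increasing \<phi> with weight \<le> 12 \<phi>' and
  (\<phi> a - \<phi> b)^2 \<le> 6 |\<Psi>(\<xi>,a) - \<Psi>(\<xi>,b)|; then \<phi> oscillates by at most sqrt (12 M) on the
  sublevel set, so the weight integrates to at most 12 sqrt (12 M) there.
  Away from \<eta> = \<xi>, \<phi> is a square root of 4/3 \<Psi> up to sign and an additive constant,
  namely sqrt \<eta> (2\<xi> - \<eta>), (\<eta> - 2\<xi>/3) sqrt (8\<xi>/3 - \<eta>) and sqrt \<eta> (\<eta> - 2\<xi>); the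
  estimate needs \<phi> of constant sign, which forces the cuts at the critical points
  2\<xi>/3 and 2\<xi> of \<Psi>(\<xi>,\<cdot>). Near \<eta> = \<xi> the phase is bi-Lipschitz with constant ~ \<xi>^2,
  \<phi> = \<xi> sqrt |\<eta> - \<xi>| up to sign, and \<mu> \<le> 1/2 keeps <\<xi>>^\<mu> / <\<xi> - \<eta>>^\<mu> below
  (\<xi> / |\<xi> - \<eta>|)^(1/2).
*)

lemma sq_diff_le_abs_diff_sq:
  fixes p q :: real
  assumes "0 \<le> p * q"
  shows "(p - q)\<^sup>2 \<le> \<bar>p\<^sup>2 - q\<^sup>2\<bar>"
proof -
  have "\<bar>p - q\<bar> \<le> \<bar>p + q\<bar>"
    using assms by (cases "0 \<le> p"; cases "0 \<le> q") (auto simp: zero_le_mult_iff)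
  then have "\<bar>p - q\<bar> * \<bar>p - q\<bar> \<le> \<bar>p - q\<bar> * \<bar>p + q\<bar>"
    by (rule mult_left_mono) simp
  then show ?thesis
    by (simp add: power2_eq_square abs_mult[symmetric] algebra_simps)
qed

lemma sq_diff_le_signed_sq:
  fixes p q :: real
  shows "(p - q)\<^sup>2 \<le> 2 * \<bar>p * \<bar>p\<bar> - q * \<bar>q\<bar>\<bar>"
proof (cases "0 \<le> p * q")
  case True
  have "(p - q)\<^sup>2 \<le> \<bar>p\<^sup>2 - q\<^sup>2\<bar>"
    by (rule sq_diff_le_abs_diff_sq[OF True])
  also have "\<bar>p\<^sup>2 - q\<^sup>2\<bar> = \<bar>p * \<bar>p\<bar> - q * \<bar>q\<bar>\<bar>"
    using True by (cases "0 \<le> p"; cases "0 \<le> q") (auto simp: zero_le_mult_iff power2_eq_square abs_minus_commute)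
  finally show ?thesis
    by (rule order_trans) simp
next
  case False
  then have "\<bar>p * \<bar>p\<bar> - q * \<bar>q\<bar>\<bar> = p\<^sup>2 + q\<^sup>2"
    by (cases "0 \<le> p"; cases "0 \<le> q") (auto simp: zero_le_mult_iff power2_eq_square)
  moreover have "0 \<le> (p + q)\<^sup>2" by simp
  ultimately show ?thesis
    by (simp add: power2_eq_square algebra_simps)
qed

lemma sqrt_mult_abs_sqrt: "sqrt x * \<bar>sqrt x\<bar> = x"
  by (cases "0 \<le> x") (auto simp: real_sqrt_minus[of "- x", simplified, symmetric])

lemma sq_sqrt_diff_le: "(sqrt p - sqrt q)\<^sup>2 \<le> 2 * \<bar>p - q\<bar>"
  using sq_diff_le_signed_sq[of "sqrt p" "sqrt q"] by (simp only: sqrt_mult_abs_sqrt)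

lemma DERIV_real_sqrt_abs:
  assumes "(f has_real_derivative D) (at t)" "f t \<noteq> 0"
  shows "((\<lambda>t. sqrt (f t)) has_real_derivative D / (2 * sqrt \<bar>f t\<bar>)) (at t)"
proof -
  have "(sqrt has_real_derivative 1 / (2 * sqrt \<bar>f t\<bar>)) (at (f t))"
    using assms(2) by (intro DERIV_real_sqrt_generic) (auto simp: divide_simps real_sqrt_minus)
  from DERIV_chain2[OF this assms(1)] show ?thesis
    by simp
qed

lemma mult_nonneg_outside_Ioo:
  fixes a b m :: real
  assumes "a \<in> {c<..<d}" "b \<in> {c<..<d}" "m \<notin> {c<..<d}"
  shows "0 \<le> (a - m) * (b - m)"
  using assms by (cases "m \<le> c") (auto intro: mult_nonneg_nonneg mult_nonpos_nonpos)

lemma powr_le_max_one: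
  fixes R \<mu> :: real
  assumes "0 < R" "0 \<le> \<mu>" "\<mu> \<le> 1"
  shows "R powr \<mu> \<le> max 1 R"
proof (cases "R \<le> 1")
  case True
  then show ?thesis
    using assms by (simp add: powr_le1)
next
  case False
  then have "R powr \<mu> \<le> R powr 1"
    using assms by (intro powr_mono) auto
  then show ?thesis
    using assms by simp
qed

lemma divide_sqrt_le_divide_sqrt:
  fixes A B s s' :: real
  assumes "0 \<le> A" "0 \<le> B" "0 < s" "0 < s'" "A\<^sup>2 * s' \<le> B\<^sup>2 * s"
  shows "A / sqrt s \<le> B / sqrt s'"
proof -
  have "sqrt (A\<^sup>2 * s') \<le> sqrt (B\<^sup>2 * s)"
    using assms(5) by (rule real_sqrt_le_mono)
  then have "A * sqrt s' \<le> B * sqrt s"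
    using assms(1,2) by (simp add: real_sqrt_mult)
  then show ?thesis
    using assms(3,4) by (simp add: divide_simps mult.commute)
qed

section \<open>Integrals over sublevel sets\<close>

lemma abs_diff_le_on_closure:
  fixes \<phi> :: "'a::topological_space \<Rightarrow> real"
  assumes cont: "continuous_on (closure S) \<phi>"
    and le: "\<And>a b. a \<in> S \<Longrightarrow> b \<in> S \<Longrightarrow> \<bar>\<phi> a - \<phi> b\<bar> \<le> D"
    and a: "a \<in> closure S" and b: "b \<in> closure S"
  shows "\<bar>\<phi> a - \<phi> b\<bar> \<le> D"
proof -
  have "\<bar>\<phi> a - \<phi> s\<bar> \<le> D" if "s \<in> S" for s
    by (rule continuous_le_on_closure[OF _ a]) (use cont that le in \<open>auto intro!: continuous_on_rabs continuous_on_diff\<close>)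
  then show ?thesis
    by (intro continuous_le_on_closure[OF _ b, where f = "\<lambda>s. \<bar>\<phi> a - \<phi> s\<bar>"])
      (use cont in \<open>auto intro!: continuous_on_rabs continuous_on_diff\<close>)
qed

lemma nn_integral_indicator_le_oscillation:
  fixes \<phi> \<phi>' f :: "real \<Rightarrow> real"
  assumes T: "finite T"
    and cont: "continuous_on {c..d} \<phi>"
    and deriv: "\<And>t. t \<in> {c<..<d} - T \<Longrightarrow> (\<phi> has_real_derivative \<phi>' t) (at t)"
    and mono: "\<And>t. t \<in> {c<..<d} - T \<Longrightarrow> 0 \<le> \<phi>' t"
    and f: "\<And>t. t \<in> {c<..<d} - T \<Longrightarrow> f t \<le> L * \<phi>' t"
    and osc: "\<And>a b. a \<in> S \<Longrightarrow> b \<in> S \<Longrightarrow> \<bar>\<phi> a - \<phi> b\<bar> \<le> D"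
    and S: "S \<subseteq> {c<..<d}" and L: "0 \<le> L"
  shows "(\<integral>\<^sup>+t. ennreal (f t) * indicator S t \<partial>lborel) \<le> ennreal (L * D)"
proof (cases "S = {}")
  case False
  \<comment> \<open>On the hull \<open>(Inf S, Sup S)\<close> we have \<open>f \<le> L * \<phi>'\<close>, and \<open>\<phi>'\<close> integrates there to an oscillation of \<open>\<phi>\<close> over \<open>closure S\<close>.\<close>
  define u where "u = Inf S"
  define v where "v = Sup S"
  have bdd: "bdd_below S" "bdd_above S"
    using S by (auto intro!: bdd_belowI[where m = c] bdd_aboveI[where M = d])
  have u_le: "u \<le> t" and le_v: "t \<le> v" if "t \<in> S" for t
    using that bdd unfolding u_def v_def by (auto intro: cInf_lower cSup_upper)
  have uv_closure: "u \<in> closure S" "v \<in> closure S"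
    unfolding u_def v_def using False bdd by (auto intro: closure_contains_Inf closure_contains_Sup)
  have closure_S: "closure S \<subseteq> {c..d}"
    using S by (intro closure_minimal) auto
  then have cuvd: "c \<le> u" "u \<le> v" "v \<le> d"
    using uv_closure False u_le le_v by fastforce+
  have "\<phi> v - \<phi> u \<le> D"
    using abs_diff_le_on_closure[OF continuous_on_subset[OF cont closure_S] osc uv_closure(2,1)]
    by simp
  define g where "g t = (if t \<in> T then 0 else \<phi>' t)" for t
  have "(g has_integral (\<phi> v - \<phi> u)) {u..v}"
  proof (rule fundamental_theorem_of_calculus_interior_strong[OF T \<open>u \<le> v\<close>])
    show "continuous_on {u..v} \<phi>"
      using cuvd by (intro continuous_on_subset[OF cont]) auto
    show "(\<phi> has_vector_derivative g t) (at t)" if "t \<in> {u<..<v} - T" for t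
      using that cuvd deriv[of t] by (simp add: g_def has_real_derivative_iff_has_vector_derivative)
  qed
  then have Lg: "((\<lambda>t. L * g t) has_integral (L * (\<phi> v - \<phi> u))) {u<..<v}"
    by (simp add: has_integral_Icc_iff_Ioo has_integral_mult_right)
  have int_g: "(\<integral>\<^sup>+t. ennreal (L * g t) * indicator {u<..<v} t \<partial>lborel) = ennreal (L * (\<phi> v - \<phi> u))"
    by (rule nn_integral_has_integral_lebesgue'[OF _ Lg]) (use mono cuvd L in \<open>auto simp: g_def\<close>)
  have "AE t in lborel. \<forall>s\<in>insert u (insert v T). t \<noteq> s"
    using T by (intro AE_finite_allI AE_lborel_singleton) auto
  then have "AE t in lborel. ennreal (f t) * indicator S t \<le> ennreal (L * g t) * indicator {u<..<v} t"
  proof eventually_elim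
    case (elim t)
    show ?case
    proof (cases "t \<in> S")
      case True
      then have "u < t" "t < v" "t \<notin> T"
        using elim u_le[OF True] le_v[OF True] by auto
      moreover have "f t \<le> L * \<phi>' t"
        using True S \<open>t \<notin> T\<close> by (intro f) auto
      ultimately show ?thesis
        using True by (auto simp: g_def indicator_def intro: ennreal_leI)
    qed simp
  qed
  then have "(\<integral>\<^sup>+t. ennreal (f t) * indicator S t \<partial>lborel) \<le> ennreal (L * (\<phi> v - \<phi> u))"
    unfolding int_g[symmetric] by (rule nn_integral_mono_AE)
  also have "\<dots> \<le> ennreal (L * D)"
    using \<open>\<phi> v - \<phi> u \<le> D\<close> L by (intro ennreal_leI mult_left_mono)
  finally show ?thesis .
qed simp

lemma nn_integral_sublevel_le:
  fixes \<phi> \<phi>' f G :: "real \<Rightarrow> real"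
  assumes "finite T" "continuous_on {c..d} \<phi>"
    and "\<And>t. t \<in> {c<..<d} - T \<Longrightarrow> (\<phi> has_real_derivative \<phi>' t) (at t)"
    and "\<And>t. t \<in> {c<..<d} - T \<Longrightarrow> 0 \<le> \<phi>' t"
    and "\<And>t. t \<in> {c<..<d} - T \<Longrightarrow> f t \<le> L * \<phi>' t"
    and sq: "\<And>a b. a \<in> {c<..<d} \<Longrightarrow> b \<in> {c<..<d} \<Longrightarrow> (\<phi> a - \<phi> b)\<^sup>2 \<le> K * \<bar>G a - G b\<bar>"
    and "0 \<le> L" and K: "0 \<le> K"
  shows "(\<integral>\<^sup>+t. ennreal (f t) * indicator ({t. \<bar>G t - \<alpha>\<bar> < M} \<inter> {c<..<d}) t \<partial>lborel)
           \<le> ennreal (L * sqrt (2 * K * M))"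
proof (rule nn_integral_indicator_le_oscillation[OF assms(1-5)])
  fix a b assume a: "a \<in> {t. \<bar>G t - \<alpha>\<bar> < M} \<inter> {c<..<d}" and b: "b \<in> {t. \<bar>G t - \<alpha>\<bar> < M} \<inter> {c<..<d}"
  have "(\<phi> a - \<phi> b)\<^sup>2 \<le> K * \<bar>G a - G b\<bar>"
    using a b by (intro sq) auto
  also have "\<dots> \<le> K * (2 * M)"
    using a b K by (intro mult_left_mono) auto
  finally show "\<bar>\<phi> a - \<phi> b\<bar> \<le> sqrt (2 * K * M)"
    by (intro real_le_rsqrt) (simp add: mult.assoc mult.left_commute)
qed (use assms(6-7) in auto)

lemma nn_integral_indicator_Ioo_split:
  fixes f :: "real \<Rightarrow> ennreal"
  assumes [measurable]: "f \<in> borel_measurable borel" "S \<in> sets borel"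
    and "c \<le> m" "m \<le> d"
  shows "(\<integral>\<^sup>+t. f t * indicator (S \<inter> {c<..<d}) t \<partial>lborel)
           = (\<integral>\<^sup>+t. f t * indicator (S \<inter> {c<..<m}) t \<partial>lborel) + (\<integral>\<^sup>+t. f t * indicator (S \<inter> {m<..<d}) t \<partial>lborel)"
proof -
  have "AE t in lborel. f t * indicator (S \<inter> {c<..<d}) t
          = f t * indicator (S \<inter> {c<..<m}) t + f t * indicator (S \<inter> {m<..<d}) t"
    using AE_lborel_singleton[of m]
    by eventually_elim (use assms(3,4) in \<open>auto simp: indicator_def\<close>)
  then show ?thesis
    by (simp add: nn_integral_cong_AE nn_integral_add)
qed

section \<open>The weight and the phase\<close>

lemma japbr_pos: "0 < japbr x"
  unfolding japbr_def by (simp add: add_pos_nonneg)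

lemma japbr_minus: "japbr (- x) = japbr x"
  unfolding japbr_def by simp

lemma japbr_le_mult:
  assumes "1 \<le> K" "\<bar>x\<bar> \<le> K * \<bar>y\<bar>"
  shows "japbr x \<le> K * japbr y"
proof -
  have "x\<^sup>2 \<le> (K * \<bar>y\<bar>)\<^sup>2"
    using assms by (metis abs_ge_zero power2_abs power_mono)
  also have "\<dots> \<le> K\<^sup>2 * (1 + y\<^sup>2) - 1"
    using assms by (simp add: algebra_simps)
  finally have "sqrt (1 + x\<^sup>2) \<le> sqrt (K\<^sup>2 * (1 + y\<^sup>2))"
    by (intro real_sqrt_le_mono) simp
  then show ?thesis
    using assms(1) unfolding japbr_def by (simp add: real_sqrt_mult)
qed

lemma japbr_mult_abs_le:
  assumes "\<bar>s\<bar> \<le> \<bar>x\<bar>"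
  shows "japbr x * \<bar>s\<bar> \<le> 2 * \<bar>x\<bar> * japbr s"
proof -
  have "s\<^sup>2 \<le> x\<^sup>2"
    using assms by (simp add: abs_le_square_iff)
  then have "(1 + x\<^sup>2) * s\<^sup>2 \<le> (2 * \<bar>x\<bar>)\<^sup>2 * (1 + s\<^sup>2)"
    by (simp add: algebra_simps) (smt (verit) mult_nonneg_nonneg zero_le_power2)
  then have "sqrt ((1 + x\<^sup>2) * s\<^sup>2) \<le> sqrt ((2 * \<bar>x\<bar>)\<^sup>2 * (1 + s\<^sup>2))"
    by (rule real_sqrt_le_mono)
  then show ?thesis
    unfolding japbr_def by (simp add: real_sqrt_mult)
qed

definition weight :: "real \<Rightarrow> real \<Rightarrow> real \<Rightarrow> real" where
  "weight \<mu> \<xi> \<eta> = max \<bar>\<xi>\<bar> \<bar>\<eta>\<bar> * japbr \<xi> powr \<mu> / (\<bar>\<eta>\<bar> powr (1/2) * japbr (\<xi> - \<eta>) powr \<mu>)"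

lemma weight_minus: "weight \<mu> \<xi> (- \<eta>) = weight \<mu> (- \<xi>) \<eta>"
  using japbr_minus[of \<xi>] japbr_minus[of "\<xi> + \<eta>"] by (simp add: weight_def)

lemma borel_measurable_weight [measurable]: "weight \<mu> \<xi> \<in> borel_measurable borel"
proof -
  have "continuous_on UNIV japbr"
    unfolding japbr_def[abs_def] by (intro continuous_intros)
  then have [measurable]: "japbr \<in> borel_measurable borel"
    by (rule borel_measurable_continuous_onI)
  show ?thesis
    unfolding weight_def[abs_def] by measurable
qed

lemma weight_eq:
  assumes "\<eta> \<noteq> 0"
  shows "weight \<mu> \<xi> \<eta> = max (\<bar>\<xi>\<bar>) (\<bar>\<eta>\<bar>) * (japbr \<xi> / japbr (\<xi> - \<eta>)) powr \<mu> / sqrt \<bar>\<eta>\<bar>"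
  using japbr_pos[of \<xi>] japbr_pos[of "\<xi> - \<eta>"]
  by (simp add: weight_def powr_divide powr_half_sqrt field_simps)

lemma weight_le_far:
  assumes "0 \<le> \<mu>" "\<mu> \<le> 1" "\<eta> \<noteq> 0" "\<bar>\<xi>\<bar> \<le> 6 * \<bar>\<xi> - \<eta>\<bar>"
  shows "weight \<mu> \<xi> \<eta> \<le> 6 * max (\<bar>\<xi>\<bar>) (\<bar>\<eta>\<bar>) / sqrt \<bar>\<eta>\<bar>"
proof -
  define R where "R = japbr \<xi> / japbr (\<xi> - \<eta>)"
  have "R \<le> 6"
    using japbr_le_mult[OF _ assms(4)] japbr_pos[of "\<xi> - \<eta>"] by (simp add: R_def divide_le_eq)
  moreover have "R powr \<mu> \<le> max 1 R"
    using assms japbr_pos[of \<xi>] japbr_pos[of "\<xi> - \<eta>"] by (intro powr_le_max_one) (auto simp: R_def)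
  ultimately have "R powr \<mu> \<le> 6"
    by simp
  then have "max (\<bar>\<xi>\<bar>) (\<bar>\<eta>\<bar>) * R powr \<mu> \<le> 6 * max (\<bar>\<xi>\<bar>) (\<bar>\<eta>\<bar>)"
    by (subst mult.commute) (rule mult_right_mono, auto)
  then show ?thesis
    unfolding weight_eq[OF assms(3)] R_def[symmetric] by (rule divide_right_mono) simp
qed

lemma weight_le_near:
  assumes "0 \<le> \<mu>" "\<mu> \<le> 1/2" "\<bar>\<xi> - \<eta>\<bar> \<le> \<xi> / 6" "\<eta> \<noteq> \<xi>"
  shows "weight \<mu> \<xi> \<eta> \<le> 6 * \<xi> / sqrt \<bar>\<xi> - \<eta>\<bar>"
proof -
  have "0 < \<bar>\<xi> - \<eta>\<bar>"
    using assms(4) by simp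
  then have \<eta>: "5 * \<xi> / 6 \<le> \<eta>" "\<eta> \<le> 7 * \<xi> / 6" "0 < \<eta>"
    using assms(3) unfolding abs_le_iff by linarith+
  define R where "R = japbr \<xi> / japbr (\<xi> - \<eta>)"
  have R: "0 < R"
    using japbr_pos[of \<xi>] japbr_pos[of "\<xi> - \<eta>"] by (simp add: R_def)
  \<comment> \<open>The only use of \<open>\<mu> \<le> 1/2\<close>: the squared bracket ratio grows at most linearly.\<close>
  have "(R powr \<mu>)\<^sup>2 = R powr (2 * \<mu>)"
    using R by (simp add: powr_power)
  also have "\<dots> \<le> max 1 R"
    using assms R by (intro powr_le_max_one) auto
  finally have "(R powr \<mu>)\<^sup>2 * \<bar>\<xi> - \<eta>\<bar> \<le> max 1 R * \<bar>\<xi> - \<eta>\<bar>"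
    by (rule mult_right_mono) simp
  also have "\<dots> \<le> 2 * \<xi>"
    using japbr_mult_abs_le[of "\<xi> - \<eta>" \<xi>] japbr_pos[of "\<xi> - \<eta>"] assms(3) \<eta>
    by (auto simp: R_def max_def field_simps)
  finally have V: "(R powr \<mu>)\<^sup>2 * \<bar>\<xi> - \<eta>\<bar> \<le> 2 * \<xi>" .
  define m where "m = max (\<bar>\<xi>\<bar>) (\<bar>\<eta>\<bar>)"
  have m: "0 \<le> m" "m \<le> 2 * \<xi>"
    using \<eta> by (auto simp: m_def)
  have "(m * R powr \<mu>)\<^sup>2 * \<bar>\<xi> - \<eta>\<bar> \<le> m\<^sup>2 * (2 * \<xi>)"
    using mult_left_mono[OF V, of "m\<^sup>2"] by (simp add: power_mult_distrib mult.assoc)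
  also have "\<dots> \<le> (2 * \<xi>)\<^sup>2 * (2 * \<xi>)"
    using m \<eta> by (intro mult_right_mono power_mono) auto
  also have "\<dots> \<le> (6 * \<xi>)\<^sup>2 * \<eta>"
    using \<eta> by (simp add: power2_eq_square)
  finally have "m * R powr \<mu> / sqrt \<bar>\<eta>\<bar> \<le> 6 * \<xi> / sqrt \<bar>\<xi> - \<eta>\<bar>"
    using \<eta> m \<open>0 < \<bar>\<xi> - \<eta>\<bar>\<close> by (intro divide_sqrt_le_divide_sqrt) auto
  then show ?thesis
    using \<eta> by (simp add: weight_eq R_def m_def)
qed

lemma Psi_minus: "Psi \<xi> (- \<eta>) = - Psi (- \<xi>) \<eta>"
  unfolding Psi_def by (simp add: power2_eq_square algebra_simps)

lemma open_Psi_sublevel: "open {\<eta>. \<bar>Psi \<xi> \<eta> - \<alpha>\<bar> < M}"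
  unfolding Psi_def by (intro open_Collect_less continuous_intros)

lemma Psi_sublevel_bounds:
  assumes "0 \<le> \<xi>" "1 \<le> r" "\<bar>\<alpha>\<bar> + M \<le> 3/4 * r" "\<bar>Psi \<xi> \<eta> - \<alpha>\<bar> < M"
  shows "- r < \<eta>" "\<eta> < 2 * \<xi> + r"
proof -
  have Psi: "\<bar>Psi \<xi> \<eta>\<bar> < 3/4 * r"
    using assms(3,4) by linarith
  show "- r < \<eta>"
  proof (rule ccontr)
    assume "\<not> - r < \<eta>"
    then have "r \<le> - \<eta>" "1 \<le> (2 * \<xi> - \<eta>)\<^sup>2"
      using assms(1,2) by (auto intro: one_le_power)
    then have "r * 1 \<le> (- \<eta>) * (2 * \<xi> - \<eta>)\<^sup>2"
      using assms(2) by (intro mult_mono) auto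
    also have "\<dots> = 4/3 * Psi \<xi> \<eta>"
      unfolding Psi_def by (simp add: power2_eq_square algebra_simps)
    finally show False
      using Psi by linarith
  qed
  show "\<eta> < 2 * \<xi> + r"
  proof (rule ccontr)
    assume "\<not> \<eta> < 2 * \<xi> + r"
    then have "r \<le> \<eta>" "1 \<le> (\<eta> - 2 * \<xi>)\<^sup>2"
      using assms(1,2) by (auto intro: one_le_power)
    then have "r * 1 \<le> \<eta> * (\<eta> - 2 * \<xi>)\<^sup>2"
      using assms(2) by (intro mult_mono) auto
    also have "\<dots> = - 4/3 * Psi \<xi> \<eta>"
      unfolding Psi_def by simp
    finally show False
      using Psi by linarith
  qed
qed

lemma Psi_diff_ge_near_xi:
  assumes "0 \<le> \<xi>" "\<bar>a - \<xi>\<bar> \<le> \<xi> / 6" "\<bar>b - \<xi>\<bar> \<le> \<xi> / 6"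
  shows "\<xi>\<^sup>2 * \<bar>a - b\<bar> \<le> 3 * \<bar>Psi \<xi> a - Psi \<xi> b\<bar>"
proof -
  define p q where "p = a - \<xi>" and "q = b - \<xi>"
  define Q where "Q = \<xi>\<^sup>2 + \<xi> * p + \<xi> * q - (p * p + p * q + q * q)"
  have pq: "\<bar>p\<bar> \<le> \<xi> / 6" "\<bar>q\<bar> \<le> \<xi> / 6"
    using assms unfolding p_def q_def by auto
  have "\<bar>\<xi> * p\<bar> \<le> \<xi> * (\<xi> / 6)" "\<bar>\<xi> * q\<bar> \<le> \<xi> * (\<xi> / 6)"
    "\<bar>p * p\<bar> \<le> (\<xi> / 6) * (\<xi> / 6)" "\<bar>p * q\<bar> \<le> (\<xi> / 6) * (\<xi> / 6)" "\<bar>q * q\<bar> \<le> (\<xi> / 6) * (\<xi> / 6)"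
    using pq assms(1) unfolding abs_mult by (intro mult_mono; simp)+
  then have Q: "7/12 * \<xi>\<^sup>2 \<le> Q"
    unfolding Q_def by (simp add: power2_eq_square abs_le_iff)
  have "0 \<le> Q"
    using Q by (rule order_trans[rotated]) simp
  have "Psi \<xi> a - Psi \<xi> b = 3/4 * (a - b) * Q"
    unfolding Psi_def Q_def p_def q_def power2_eq_square by algebra
  then have "\<bar>Psi \<xi> a - Psi \<xi> b\<bar> = 3/4 * \<bar>a - b\<bar> * Q"
    using \<open>0 \<le> Q\<close> by (simp only: abs_mult abs_of_nonneg)
  also have "\<dots> \<ge> 3/4 * \<bar>a - b\<bar> * (7/12 * \<xi>\<^sup>2)"
    using Q by (intro mult_left_mono) auto
  finally have "7 * (\<xi>\<^sup>2 * \<bar>a - b\<bar>) \<le> 16 * \<bar>Psi \<xi> a - Psi \<xi> b\<bar>"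
    by (simp add: mult_ac)
  then show ?thesis
    using abs_ge_zero[of "Psi \<xi> a - Psi \<xi> b"] by (smt (verit))
qed

section \<open>The weighted integral over a sublevel set of the phase\<close>

lemma weight_integral_left_le:
  assumes "0 \<le> \<mu>" "\<mu> \<le> 1" "0 \<le> \<xi>" "d \<le> \<xi> / 3"
  shows "(\<integral>\<^sup>+\<eta>. ennreal (weight \<mu> \<xi> \<eta>) * indicator ({\<eta>. \<bar>Psi \<xi> \<eta> - \<alpha>\<bar> < M} \<inter> {c<..<d}) \<eta> \<partial>lborel)
           \<le> ennreal (12 * sqrt (12 * M))"
proof -
  \<comment> \<open>Since \<open>sqrt\<close> is odd, \<open>\<phi>\<close> is a signed square root of \<open>- 4/3 * Psi \<xi>\<close> on both sides of the simple zero \<open>\<eta> = 0\<close>.\<close>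
  define \<phi> where "\<phi> \<eta> = sqrt \<eta> * (2 * \<xi> - \<eta>)" for \<eta>
  have signed_sq: "\<phi> \<eta> * \<bar>\<phi> \<eta>\<bar> = - 4/3 * Psi \<xi> \<eta>" if "\<eta> \<le> 2 * \<xi>" for \<eta>
  proof -
    have "\<phi> \<eta> * \<bar>\<phi> \<eta>\<bar> = (sqrt \<eta> * \<bar>sqrt \<eta>\<bar>) * (2 * \<xi> - \<eta>)\<^sup>2"
      using that by (simp add: \<phi>_def abs_mult power2_eq_square)
    then show ?thesis
      by (simp add: sqrt_mult_abs_sqrt Psi_def power2_eq_square algebra_simps)
  qed
  have "(\<integral>\<^sup>+\<eta>. ennreal (weight \<mu> \<xi> \<eta>) * indicator ({\<eta>. \<bar>Psi \<xi> \<eta> - \<alpha>\<bar> < M} \<inter> {c<..<d}) \<eta> \<partial>lborel)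
          \<le> ennreal (12 * sqrt (2 * 6 * M))"
  proof (rule nn_integral_sublevel_le[where T = "{0}" and \<phi>' = "\<lambda>\<eta>. (2 * \<xi> - 3 * \<eta>) / (2 * sqrt \<bar>\<eta>\<bar>)"])
    show "continuous_on {c..d} \<phi>"
      unfolding \<phi>_def by (intro continuous_intros)
    fix \<eta> assume \<eta>: "\<eta> \<in> {c<..<d} - {0}"
    have "(\<phi> has_real_derivative 1 / (2 * sqrt \<bar>\<eta>\<bar>) * (2 * \<xi> - \<eta>) + (0 - 1) * sqrt \<eta>) (at \<eta>)"
      unfolding \<phi>_def using \<eta>
      by (intro DERIV_mult DERIV_diff DERIV_const DERIV_ident DERIV_real_sqrt_abs[OF DERIV_ident]) auto
    then show "(\<phi> has_real_derivative (2 * \<xi> - 3 * \<eta>) / (2 * sqrt \<bar>\<eta>\<bar>)) (at \<eta>)"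
      by (rule DERIV_cong) (use \<eta> in \<open>simp add: field_simps real_sqrt_abs' sqrt_mult_abs_sqrt\<close>)
    show "0 \<le> (2 * \<xi> - 3 * \<eta>) / (2 * sqrt \<bar>\<eta>\<bar>)"
      using \<eta> assms by simp
    have "weight \<mu> \<xi> \<eta> \<le> 6 * max (\<bar>\<xi>\<bar>) (\<bar>\<eta>\<bar>) / sqrt \<bar>\<eta>\<bar>"
      using \<eta> assms by (intro weight_le_far) auto
    also have "\<dots> \<le> 6 * (2 * \<xi> - 3 * \<eta>) / sqrt \<bar>\<eta>\<bar>"
      using \<eta> assms by (intro divide_right_mono mult_left_mono) auto
    also have "\<dots> = 12 * ((2 * \<xi> - 3 * \<eta>) / (2 * sqrt \<bar>\<eta>\<bar>))"
      by (simp add: field_split_simps)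
    finally show "weight \<mu> \<xi> \<eta> \<le> 12 * ((2 * \<xi> - 3 * \<eta>) / (2 * sqrt \<bar>\<eta>\<bar>))" .
  next
    fix a b assume ab: "a \<in> {c<..<d}" "b \<in> {c<..<d}"
    have "(\<phi> a - \<phi> b)\<^sup>2 \<le> 2 * \<bar>\<phi> a * \<bar>\<phi> a\<bar> - \<phi> b * \<bar>\<phi> b\<bar>\<bar>"
      by (rule sq_diff_le_signed_sq)
    also have "\<phi> a * \<bar>\<phi> a\<bar> - \<phi> b * \<bar>\<phi> b\<bar> = - 4/3 * (Psi \<xi> a - Psi \<xi> b)"
      using ab assms by (simp add: signed_sq right_diff_distrib)
    also have "2 * \<bar>- 4/3 * (Psi \<xi> a - Psi \<xi> b)\<bar> \<le> 6 * \<bar>Psi \<xi> a - Psi \<xi> b\<bar>"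
      unfolding abs_mult by simp
    finally show "(\<phi> a - \<phi> b)\<^sup>2 \<le> 6 * \<bar>Psi \<xi> a - Psi \<xi> b\<bar>" .
  qed auto
  then show ?thesis
    by simp
qed

lemma weight_integral_middle_le:
  assumes "0 \<le> \<mu>" "\<mu> \<le> 1" "\<xi> / 3 \<le> c" "d \<le> 5 * \<xi> / 6" "2 * \<xi> / 3 \<notin> {c<..<d}"
  shows "(\<integral>\<^sup>+\<eta>. ennreal (weight \<mu> \<xi> \<eta>) * indicator ({\<eta>. \<bar>Psi \<xi> \<eta> - \<alpha>\<bar> < M} \<inter> {c<..<d}) \<eta> \<partial>lborel)
           \<le> ennreal (12 * sqrt (12 * M))"
proof -
  define \<phi> where "\<phi> \<eta> = (\<eta> - 2 * \<xi> / 3) * sqrt (8 * \<xi> / 3 - \<eta>)" for \<eta>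
  have sq: "(\<phi> \<eta>)\<^sup>2 = 4/3 * Psi \<xi> \<eta> + 32 * \<xi> ^ 3 / 27" if "\<eta> \<le> 8 * \<xi> / 3" for \<eta>
  proof -
    have "(\<phi> \<eta>)\<^sup>2 = (\<eta> - 2 * \<xi> / 3)\<^sup>2 * (8 * \<xi> / 3 - \<eta>)"
      using that by (simp add: \<phi>_def power_mult_distrib)
    then show ?thesis
      unfolding Psi_def power2_eq_square power3_eq_cube by algebra
  qed
  have "(\<integral>\<^sup>+\<eta>. ennreal (weight \<mu> \<xi> \<eta>) * indicator ({\<eta>. \<bar>Psi \<xi> \<eta> - \<alpha>\<bar> < M} \<inter> {c<..<d}) \<eta> \<partial>lborel)
          \<le> ennreal (12 * sqrt (2 * 6 * M))"
  proof (rule nn_integral_sublevel_le[where T = "{}" and \<phi>' = "\<lambda>\<eta>. (6 * \<xi> - 3 * \<eta>) / (2 * sqrt (8 * \<xi> / 3 - \<eta>))"])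
    show "continuous_on {c..d} \<phi>"
      unfolding \<phi>_def by (intro continuous_intros)
    fix \<eta> assume "\<eta> \<in> {c<..<d} - {}"
    then have \<eta>: "\<xi> / 3 < \<eta>" "\<eta> < 5 * \<xi> / 6"
      using assms by auto
    show "(\<phi> has_real_derivative (6 * \<xi> - 3 * \<eta>) / (2 * sqrt (8 * \<xi> / 3 - \<eta>))) (at \<eta>)"
      unfolding \<phi>_def using \<eta>
      by (auto intro!: derivative_eq_intros simp: field_simps)
    show "0 \<le> (6 * \<xi> - 3 * \<eta>) / (2 * sqrt (8 * \<xi> / 3 - \<eta>))"
      using \<eta> by simp
    have "weight \<mu> \<xi> \<eta> \<le> 6 * max (\<bar>\<xi>\<bar>) (\<bar>\<eta>\<bar>) / sqrt \<bar>\<eta>\<bar>"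
      using \<eta> assms by (intro weight_le_far) auto
    also have "\<dots> = 6 * \<xi> / sqrt \<eta>"
      using \<eta> by (simp add: max_def)
    also have "\<dots> \<le> 6 * (6 * \<xi> - 3 * \<eta>) / sqrt (8 * \<xi> / 3 - \<eta>)"
    proof (rule divide_sqrt_le_divide_sqrt)
      have "\<xi>\<^sup>2 * (8 * \<xi> / 3 - \<eta>) \<le> \<xi>\<^sup>2 * (7 * \<xi> / 3)"
        using \<eta> by (intro mult_left_mono) auto
      also have "\<dots> \<le> (7 * \<xi> / 2)\<^sup>2 * (\<xi> / 3)"
        using \<eta> by (simp add: power2_eq_square)
      also have "\<dots> \<le> (6 * \<xi> - 3 * \<eta>)\<^sup>2 * \<eta>"
        using \<eta> by (intro mult_mono power_mono) auto
      finally have "6\<^sup>2 * (\<xi>\<^sup>2 * (8 * \<xi> / 3 - \<eta>)) \<le> 6\<^sup>2 * ((6 * \<xi> - 3 * \<eta>)\<^sup>2 * \<eta>)"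
        by (rule mult_left_mono) simp
      then show "(6 * \<xi>)\<^sup>2 * (8 * \<xi> / 3 - \<eta>) \<le> (6 * (6 * \<xi> - 3 * \<eta>))\<^sup>2 * \<eta>"
        by (simp only: power_mult_distrib mult.assoc)
    qed (use \<eta> in auto)
    also have "\<dots> = 12 * ((6 * \<xi> - 3 * \<eta>) / (2 * sqrt (8 * \<xi> / 3 - \<eta>)))"
      by (simp add: field_split_simps)
    finally show "weight \<mu> \<xi> \<eta> \<le> 12 * ((6 * \<xi> - 3 * \<eta>) / (2 * sqrt (8 * \<xi> / 3 - \<eta>)))" .
  next
    fix a b assume ab: "a \<in> {c<..<d}" "b \<in> {c<..<d}"
    then have le: "a \<le> 8 * \<xi> / 3" "b \<le> 8 * \<xi> / 3"
      using assms by auto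
    have "0 \<le> ((a - 2 * \<xi> / 3) * (b - 2 * \<xi> / 3)) * (sqrt (8 * \<xi> / 3 - a) * sqrt (8 * \<xi> / 3 - b))"
      using mult_nonneg_outside_Ioo[OF ab assms(5)] le by simp
    then have "(\<phi> a - \<phi> b)\<^sup>2 \<le> \<bar>(\<phi> a)\<^sup>2 - (\<phi> b)\<^sup>2\<bar>"
      by (intro sq_diff_le_abs_diff_sq) (simp add: \<phi>_def mult_ac)
    also have "(\<phi> a)\<^sup>2 - (\<phi> b)\<^sup>2 = 4/3 * (Psi \<xi> a - Psi \<xi> b)"
      using le by (simp add: sq right_diff_distrib)
    also have "\<bar>4/3 * (Psi \<xi> a - Psi \<xi> b)\<bar> \<le> 6 * \<bar>Psi \<xi> a - Psi \<xi> b\<bar>"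
      unfolding abs_mult by simp
    finally show "(\<phi> a - \<phi> b)\<^sup>2 \<le> 6 * \<bar>Psi \<xi> a - Psi \<xi> b\<bar>" .
  qed auto
  then show ?thesis
    by simp
qed

lemma weight_integral_near_le:
  assumes "0 \<le> \<mu>" "\<mu> \<le> 1/2" "0 \<le> \<xi>" "5 * \<xi> / 6 \<le> c" "d \<le> 7 * \<xi> / 6"
  shows "(\<integral>\<^sup>+\<eta>. ennreal (weight \<mu> \<xi> \<eta>) * indicator ({\<eta>. \<bar>Psi \<xi> \<eta> - \<alpha>\<bar> < M} \<inter> {c<..<d}) \<eta> \<partial>lborel)
           \<le> ennreal (12 * sqrt (12 * M))"
proof -
  \<comment> \<open>Equal to \<open>\<xi> * sqrt \<bar>\<eta> - \<xi>\<bar>\<close> times the sign of \<open>\<eta> - \<xi>\<close>, because \<open>sqrt\<close> is odd.\<close>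
  define \<phi> where "\<phi> \<eta> = - \<xi> * sqrt (\<xi> - \<eta>)" for \<eta>
  have "(\<integral>\<^sup>+\<eta>. ennreal (weight \<mu> \<xi> \<eta>) * indicator ({\<eta>. \<bar>Psi \<xi> \<eta> - \<alpha>\<bar> < M} \<inter> {c<..<d}) \<eta> \<partial>lborel)
          \<le> ennreal (12 * sqrt (2 * 6 * M))"
  proof (rule nn_integral_sublevel_le[where T = "{\<xi>}" and \<phi>' = "\<lambda>\<eta>. \<xi> / (2 * sqrt \<bar>\<xi> - \<eta>\<bar>)"])
    show "continuous_on {c..d} \<phi>"
      unfolding \<phi>_def by (intro continuous_intros)
    fix \<eta> assume \<eta>: "\<eta> \<in> {c<..<d} - {\<xi>}"
    have "(\<phi> has_real_derivative - \<xi> * ((0 - 1) / (2 * sqrt \<bar>\<xi> - \<eta>\<bar>))) (at \<eta>)"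
      unfolding \<phi>_def using \<eta>
      by (intro DERIV_cmult DERIV_real_sqrt_abs DERIV_diff DERIV_const DERIV_ident) auto
    then show "(\<phi> has_real_derivative \<xi> / (2 * sqrt \<bar>\<xi> - \<eta>\<bar>)) (at \<eta>)"
      by simp
    show "0 \<le> \<xi> / (2 * sqrt \<bar>\<xi> - \<eta>\<bar>)"
      using assms by simp
    have "\<bar>\<xi> - \<eta>\<bar> \<le> \<xi> / 6"
      unfolding abs_le_iff using \<eta> assms by auto
    then have "weight \<mu> \<xi> \<eta> \<le> 6 * \<xi> / sqrt \<bar>\<xi> - \<eta>\<bar>"
      using \<eta> assms by (intro weight_le_near) auto
    then show "weight \<mu> \<xi> \<eta> \<le> 12 * (\<xi> / (2 * sqrt \<bar>\<xi> - \<eta>\<bar>))"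
      by simp
  next
    fix a b assume ab: "a \<in> {c<..<d}" "b \<in> {c<..<d}"
    have near: "\<bar>a - \<xi>\<bar> \<le> \<xi> / 6" "\<bar>b - \<xi>\<bar> \<le> \<xi> / 6"
      unfolding abs_le_iff using ab assms by auto
    have "(\<phi> a - \<phi> b)\<^sup>2 = \<xi>\<^sup>2 * (sqrt (\<xi> - a) - sqrt (\<xi> - b))\<^sup>2"
      by (simp add: \<phi>_def power2_eq_square algebra_simps)
    also have "\<dots> \<le> \<xi>\<^sup>2 * (2 * \<bar>a - b\<bar>)"
      using sq_sqrt_diff_le[of "\<xi> - a" "\<xi> - b"] by (intro mult_left_mono) (auto simp: abs_minus_commute)
    also have "\<dots> = 2 * (\<xi>\<^sup>2 * \<bar>a - b\<bar>)"
      by simp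
    also have "\<dots> \<le> 2 * (3 * \<bar>Psi \<xi> a - Psi \<xi> b\<bar>)"
      by (rule mult_left_mono[OF Psi_diff_ge_near_xi[OF assms(3) near]]) simp
    finally show "(\<phi> a - \<phi> b)\<^sup>2 \<le> 6 * \<bar>Psi \<xi> a - Psi \<xi> b\<bar>"
      by simp
  qed auto
  then show ?thesis
    by simp
qed

lemma weight_integral_right_le:
  assumes "0 \<le> \<mu>" "\<mu> \<le> 1" "0 \<le> \<xi>" "7 * \<xi> / 6 \<le> c" "2 * \<xi> \<notin> {c<..<d}"
  shows "(\<integral>\<^sup>+\<eta>. ennreal (weight \<mu> \<xi> \<eta>) * indicator ({\<eta>. \<bar>Psi \<xi> \<eta> - \<alpha>\<bar> < M} \<inter> {c<..<d}) \<eta> \<partial>lborel)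
           \<le> ennreal (12 * sqrt (12 * M))"
proof -
  define \<phi> where "\<phi> \<eta> = sqrt \<eta> * (\<eta> - 2 * \<xi>)" for \<eta>
  have sq: "(\<phi> \<eta>)\<^sup>2 = - 4/3 * Psi \<xi> \<eta>" if "0 \<le> \<eta>" for \<eta>
    using that by (simp add: \<phi>_def Psi_def power_mult_distrib)
  have "(\<integral>\<^sup>+\<eta>. ennreal (weight \<mu> \<xi> \<eta>) * indicator ({\<eta>. \<bar>Psi \<xi> \<eta> - \<alpha>\<bar> < M} \<inter> {c<..<d}) \<eta> \<partial>lborel)
          \<le> ennreal (12 * sqrt (2 * 6 * M))"
  proof (rule nn_integral_sublevel_le[where T = "{}" and \<phi>' = "\<lambda>\<eta>. (3 * \<eta> - 2 * \<xi>) / (2 * sqrt \<eta>)"])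
    show "continuous_on {c..d} \<phi>"
      unfolding \<phi>_def by (intro continuous_intros)
    fix \<eta> assume "\<eta> \<in> {c<..<d} - {}"
    then have \<eta>: "7 * \<xi> / 6 < \<eta>" "0 < \<eta>"
      using assms by auto
    show "(\<phi> has_real_derivative (3 * \<eta> - 2 * \<xi>) / (2 * sqrt \<eta>)) (at \<eta>)"
      unfolding \<phi>_def using \<eta>
      by (auto intro!: derivative_eq_intros simp: field_simps)
    show "0 \<le> (3 * \<eta> - 2 * \<xi>) / (2 * sqrt \<eta>)"
      using \<eta> by simp
    have "weight \<mu> \<xi> \<eta> \<le> 6 * max (\<bar>\<xi>\<bar>) (\<bar>\<eta>\<bar>) / sqrt \<bar>\<eta>\<bar>"
      using \<eta> assms by (intro weight_le_far) auto
    also have "\<dots> = 6 * \<eta> / sqrt \<eta>"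
      using \<eta> assms by (simp add: max_def)
    also have "\<dots> \<le> 6 * (3 * \<eta> - 2 * \<xi>) / sqrt \<eta>"
      using \<eta> by (intro divide_right_mono) auto
    also have "\<dots> = 12 * ((3 * \<eta> - 2 * \<xi>) / (2 * sqrt \<eta>))"
      by (simp add: field_split_simps)
    finally show "weight \<mu> \<xi> \<eta> \<le> 12 * ((3 * \<eta> - 2 * \<xi>) / (2 * sqrt \<eta>))" .
  next
    fix a b assume ab: "a \<in> {c<..<d}" "b \<in> {c<..<d}"
    then have pos: "0 \<le> a" "0 \<le> b"
      using assms by auto
    have "0 \<le> ((a - 2 * \<xi>) * (b - 2 * \<xi>)) * (sqrt a * sqrt b)"
      using mult_nonneg_outside_Ioo[OF ab assms(5)] pos by simp
    then have "(\<phi> a - \<phi> b)\<^sup>2 \<le> \<bar>(\<phi> a)\<^sup>2 - (\<phi> b)\<^sup>2\<bar>"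
      by (intro sq_diff_le_abs_diff_sq) (simp add: \<phi>_def mult_ac)
    also have "(\<phi> a)\<^sup>2 - (\<phi> b)\<^sup>2 = - 4/3 * (Psi \<xi> a - Psi \<xi> b)"
      using pos by (simp add: sq right_diff_distrib)
    also have "\<bar>- 4/3 * (Psi \<xi> a - Psi \<xi> b)\<bar> \<le> 6 * \<bar>Psi \<xi> a - Psi \<xi> b\<bar>"
      unfolding abs_mult by simp
    finally show "(\<phi> a - \<phi> b)\<^sup>2 \<le> 6 * \<bar>Psi \<xi> a - Psi \<xi> b\<bar>" .
  qed auto
  then show ?thesis
    by simp
qed

lemma weight_integral_nonneg_xi_le:
  assumes \<mu>: "0 \<le> \<mu>" "\<mu> \<le> 1/2" and \<xi>: "0 \<le> \<xi>" and M: "0 < M"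
  shows "(\<integral>\<^sup>+\<eta>. ennreal (weight \<mu> \<xi> \<eta>) * indicator {\<eta>. \<bar>Psi \<xi> \<eta> - \<alpha>\<bar> < M} \<eta> \<partial>lborel)
           \<le> ennreal (72 * sqrt (12 * M))"
proof -
  define r where "r = 2 * (\<bar>\<alpha>\<bar> + M) + 1"
  define E where "E = {\<eta>. \<bar>Psi \<xi> \<eta> - \<alpha>\<bar> < M}"
  define F where "F c d = (\<integral>\<^sup>+\<eta>. ennreal (weight \<mu> \<xi> \<eta>) * indicator (E \<inter> {c<..<d}) \<eta> \<partial>lborel)" for c d
  define B where "B = ennreal (12 * sqrt (12 * M))"
  have r: "1 \<le> r" "\<bar>\<alpha>\<bar> + M \<le> 3/4 * r"
    using M by (auto simp: r_def)
  have F_split: "F c d = F c m + F m d" if "c \<le> m" "m \<le> d" for c m d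
    unfolding F_def using open_Psi_sublevel that
    by (intro nn_integral_indicator_Ioo_split) (auto simp: E_def)
  have "E \<subseteq> {- r<..<2 * \<xi> + r}"
    using Psi_sublevel_bounds[OF \<xi> r] by (auto simp: E_def)
  then have "(\<integral>\<^sup>+\<eta>. ennreal (weight \<mu> \<xi> \<eta>) * indicator E \<eta> \<partial>lborel) = F (- r) (2 * \<xi> + r)"
    unfolding F_def by (simp add: Int_absorb2)
  also have "\<dots> = F (- r) (\<xi> / 3) + (F (\<xi> / 3) (2 * \<xi> / 3) + (F (2 * \<xi> / 3) (5 * \<xi> / 6)
          + (F (5 * \<xi> / 6) (7 * \<xi> / 6) + (F (7 * \<xi> / 6) (2 * \<xi>) + F (2 * \<xi>) (2 * \<xi> + r)))))"
    using \<xi> r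
    by (simp add: F_split[of "- r" "\<xi> / 3" "2 * \<xi> + r"] F_split[of "\<xi> / 3" "2 * \<xi> / 3" "2 * \<xi> + r"]
        F_split[of "2 * \<xi> / 3" "5 * \<xi> / 6" "2 * \<xi> + r"] F_split[of "5 * \<xi> / 6" "7 * \<xi> / 6" "2 * \<xi> + r"]
        F_split[of "7 * \<xi> / 6" "2 * \<xi>" "2 * \<xi> + r"])
  also have "\<dots> \<le> B + (B + (B + (B + (B + B))))"
  proof (intro add_mono)
    show "F (- r) (\<xi> / 3) \<le> B"
      unfolding F_def B_def E_def using \<mu> \<xi> by (intro weight_integral_left_le) auto
    show "F (\<xi> / 3) (2 * \<xi> / 3) \<le> B" "F (2 * \<xi> / 3) (5 * \<xi> / 6) \<le> B"
      unfolding F_def B_def E_def using \<mu> \<xi> by (intro weight_integral_middle_le; simp)+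
    show "F (5 * \<xi> / 6) (7 * \<xi> / 6) \<le> B"
      unfolding F_def B_def E_def using \<mu> \<xi> by (intro weight_integral_near_le) auto
    show "F (7 * \<xi> / 6) (2 * \<xi>) \<le> B" "F (2 * \<xi>) (2 * \<xi> + r) \<le> B"
      unfolding F_def B_def E_def using \<mu> \<xi> by (intro weight_integral_right_le; simp)+
  qed
  also have "\<dots> = ennreal (6 * (12 * sqrt (12 * M)))"
    using M by (simp add: B_def ennreal_plus[symmetric] del: ennreal_plus)
  finally show ?thesis
    by (simp add: E_def)
qed

lemma weight_integral_le:
  assumes "0 \<le> \<mu>" "\<mu> \<le> 1/2" "0 < M"
  shows "(\<integral>\<^sup>+\<eta>. ennreal (weight \<mu> \<xi> \<eta>) * indicator {\<eta>. \<bar>Psi \<xi> \<eta> - \<alpha>\<bar> < M} \<eta> \<partial>lborel)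
           \<le> ennreal (72 * sqrt (12 * M))"
proof (cases "0 \<le> \<xi>")
  case True
  then show ?thesis
    by (rule weight_integral_nonneg_xi_le[OF assms(1,2) _ assms(3)])
next
  case False
  have "{\<eta>. \<bar>Psi \<xi> \<eta> - \<alpha>\<bar> < M} \<in> sets borel"
    using open_Psi_sublevel by (rule borel_open)
  then have meas: "(\<lambda>\<eta>. ennreal (weight \<mu> \<xi> \<eta>) * indicator {\<eta>. \<bar>Psi \<xi> \<eta> - \<alpha>\<bar> < M} \<eta>) \<in> borel_measurable borel"
    by measurable
  have "(\<integral>\<^sup>+\<eta>. ennreal (weight \<mu> \<xi> \<eta>) * indicator {\<eta>. \<bar>Psi \<xi> \<eta> - \<alpha>\<bar> < M} \<eta> \<partial>lborel)
      = (\<integral>\<^sup>+\<eta>. ennreal (weight \<mu> \<xi> (- \<eta>)) * indicator {\<eta>. \<bar>Psi \<xi> \<eta> - \<alpha>\<bar> < M} (- \<eta>) \<partial>lborel)"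
    using nn_integral_real_affine[OF meas, of "-1" 0] by simp
  also have "\<dots> = (\<integral>\<^sup>+\<eta>. ennreal (weight \<mu> (- \<xi>) \<eta>) * indicator {\<eta>. \<bar>Psi (- \<xi>) \<eta> - (- \<alpha>)\<bar> < M} \<eta> \<partial>lborel)"
  proof -
    have "indicator {\<eta>. \<bar>Psi \<xi> \<eta> - \<alpha>\<bar> < M} (- \<eta>) = (indicator {\<eta>. \<bar>Psi (- \<xi>) \<eta> - (- \<alpha>)\<bar> < M} \<eta> :: ennreal)"
      for \<eta>
      by (auto simp: indicator_def Psi_minus abs_minus_commute)
    then show ?thesis
      by (simp only: weight_minus)
  qed
  also have "\<dots> \<le> ennreal (72 * sqrt (12 * M))"
    using False assms by (intro weight_integral_nonneg_xi_le) auto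
  finally show ?thesis .
qed

theorem proposition3p7:
  fixes \<mu> :: real
  assumes "0 < \<mu>" and "\<mu> < 1/2"
  shows "\<exists>C>0. \<forall>M::real. M \<ge> 1 \<longrightarrow> (\<forall>\<xi> \<alpha> :: real.
           (\<integral>\<^sup>+ \<eta>. ennreal (max \<bar>\<xi>\<bar> \<bar>\<eta>\<bar> * japbr \<xi> powr \<mu>
                 / (\<bar>\<eta>\<bar> powr (1/2) * japbr (\<xi> - \<eta>) powr \<mu>)
                 * indicator {\<eta>. \<bar>Psi \<xi> \<eta> - \<alpha>\<bar> < M} \<eta>) \<partial>lborel)
           \<le> ennreal (C * sqrt M))"
proof (unfold weight_def[symmetric], intro exI[of _ "72 * sqrt 12"] conjI allI impI)
  fix M \<xi> \<alpha> :: real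
  assume "M \<ge> 1"
  have "(\<integral>\<^sup>+\<eta>. ennreal (weight \<mu> \<xi> \<eta>) * indicator {\<eta>. \<bar>Psi \<xi> \<eta> - \<alpha>\<bar> < M} \<eta> \<partial>lborel)
          \<le> ennreal (72 * sqrt (12 * M))"
    using assms \<open>M \<ge> 1\<close> by (intro weight_integral_le) auto
  then show "(\<integral>\<^sup>+\<eta>. ennreal (weight \<mu> \<xi> \<eta> * indicator {\<eta>. \<bar>Psi \<xi> \<eta> - \<alpha>\<bar> < M} \<eta>) \<partial>lborel)
               \<le> ennreal (72 * sqrt 12 * sqrt M)"
    by (simp add: ennreal_mult'' ennreal_indicator real_sqrt_mult mult.assoc)
qed simp

end
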